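(* Let $b\in(0,1)$ be a dyadic rational with exactly $n\ge 2$ binary digits, i.e. $b=0.b_2b_3\cdots b_{n-1}1$ in base $2$. Then $$\mathrm{ext}(P_b)=\mathrm{ext}(P_{b-2^{1-n}})+\mathrm{ext}(P_{b+2^{1-n}}),$$ with the convention $\mathrm{ext}(P_1)=0$.
   Context: For a finite poset $P$, $\mathrm{ext}(P)$ denotes the number of linear extensions of $P$. Say a dyadic rational $b\in[0,1)$ "has $n$ digits" if its base-2 expansion needs exactly $n$ digits counting the digit before the point: $b=0$ has $1$ digit, and for $n\ge2$ the numbers with $n$ digits are $k/2^{n-1}$ with $k$ odd. Posets $P_b$ (with $|P_b|$ equal to the number of digits of $b$), together with distinguished elements $L_b,R_b$, are defined recursively. $P_0$ is a single element $R_0$ (no $L_0$). $P_{1/2}$ is the two-element chain $L_{1/2}<R_{1/2}$. For $n\ge2$ and $b$ with $n$ digits: (i) $P_{b-2^{-n}}$ is obtained from $P_b$ by adding a new element $x$ that lies below every element of $P_b$ except $L_b$, with which it is incomparable; set $R_{b-2^{-n}}=x$, $L_{b-2^{-n}}=L_b$. (ii) $P_{b+2^{-n}}$ is obtained from $P_b$ by adding a new element $x$ that lies below every element of $P_b$ except $R_b$ if $R_b$ is minimal in $P_b$ (in which case $x$ and $R_b$ are incomparable), and below every element of $P_b$ if $R_b$ is not minimal; set $L_{b+2^{-n}}=x$, $R_{b+2^{-n}}=R_b$. (In all cases $L_b$ is minimal in $P_b$.) *)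

theory Defs
  imports Complex_Main
begin

definition ext :: "'a set \<Rightarrow> ('a \<times> 'a) set \<Rightarrow> nat" where
  "ext A S = card {xs. distinct xs \<and> set xs = A \<and>
      (\<forall>i j. i < length xs \<longrightarrow> j < length xs \<longrightarrow> (xs ! i, xs ! j) \<in> S \<longrightarrow> i < j)}"

text \<open>pos n k: the poset P_b for b = k / 2^(n-1) (n = number of digits; k odd if n \<ge> 2).
  Carrier is {0..<n}; the element added at stage m (size m+1) is m.
  Result: (strict order relation, L_b, R_b).  For n = 1 (b = 0) there is no L; the L
  component is then meaningless.\<close>
fun pos :: "nat \<Rightarrow> nat \<Rightarrow> (nat \<times> nat) set \<times> nat \<times> nat" where
  "pos 0 k = ({}, 0, 0)"
| "pos (Suc 0) k = ({}, 0, 0)"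
| "pos (Suc (Suc 0)) k = ({(0, 1)}, 0, 1)"
| "pos (Suc (Suc (Suc m))) k =
     (let n = Suc (Suc m) in
      if odd ((k + 1) div 2) then
        \<comment> \<open>k/2^n = b - 2^(-n) with b = ((k+1) div 2)/2^(n-1): rule (i)\<close>
        (case pos n ((k + 1) div 2) of (S, L, R) \<Rightarrow>
          (S \<union> {(n, y) | y. y < n \<and> y \<noteq> L}, L, n))
      else
        \<comment> \<open>k/2^n = b + 2^(-n) with b = ((k-1) div 2)/2^(n-1): rule (ii)\<close>
        (case pos n ((k - 1) div 2) of (S, L, R) \<Rightarrow>
          (if (\<forall>y. (y, R) \<notin> S)
           then S \<union> {(n, y) | y. y < n \<and> y \<noteq> R}
           else S \<union> {(n, y) | y. y < n}, n, R)))"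

definition digits_code :: "real \<Rightarrow> nat \<Rightarrow> nat \<Rightarrow> bool" where
  "digits_code b n k \<longleftrightarrow> (n = 1 \<and> k = 0 \<and> b = 0) \<or>
     (n \<ge> 2 \<and> odd k \<and> k < 2 ^ (n - 1) \<and> b = real k / 2 ^ (n - 1))"

definition has_digits :: "real \<Rightarrow> nat \<Rightarrow> bool" where
  "has_digits b n \<longleftrightarrow> (\<exists>k. digits_code b n k)"

definition extP :: "real \<Rightarrow> nat" where
  "extP b = (if b = 1 then 0 else
     (case (THE (n, k). digits_code b n k) of (n, k) \<Rightarrow> ext {0..<n} (fst (pos n k))))"

end

theory Submission
  imports Defs
begin

text \<open>For n \<ge> 3, P_b arises from the poset P_b' of its parent b' = b \<plusminus> 2^(1-n) (one digit
  fewer) by adjoining a new element x below everything except possibly one minimal element a.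
  A linear extension then starts either with x, or with a immediately followed by x, so
  ext(P_b) = ext(P_b') + ext(P_b' - a).  The parent b' is one neighbour of b; the other
  neighbour is accounted for by the invariant that removing L_b from P_b leaves a poset with as
  many linear extensions as P of the dyadic just left of b with fewer digits, and removing R_b
  (when it is minimal) one with as many as P of the dyadic just right of b.  R_b is not
  minimal only for b = 1 - 2^(1-n), whose right neighbour 1 contributes ext(P_1) = 0.\<close>

definition linear_extensions :: "'a set \<Rightarrow> ('a \<times> 'a) set \<Rightarrow> 'a list set" where
  "linear_extensions A S = {xs. distinct xs \<and> set xs = A \<and> (\<forall>x\<in>A. (x, x) \<notin> S) \<and>
     sorted_wrt (\<lambda>x y. (y, x) \<notin> S) xs}"

lemma Cons_in_linear_extensions:
  "x # xs \<in> linear_extensions A S \<longleftrightarrow>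
     x \<in> A \<and> (x, x) \<notin> S \<and> (\<forall>y\<in>set xs. (y, x) \<notin> S) \<and> xs \<in> linear_extensions (A - {x}) S"
  unfolding linear_extensions_def by auto

lemma set_linear_extensions: "xs \<in> linear_extensions A S \<Longrightarrow> set xs = A"
  by (simp add: linear_extensions_def)

lemma ext_eq_card: "ext A S = card (linear_extensions A S)"
proof -
  have compatible_iff: "(\<forall>i j. i < length xs \<longrightarrow> j < length xs \<longrightarrow> (xs ! i, xs ! j) \<in> S \<longrightarrow> i < j) \<longleftrightarrow>
        (\<forall>x\<in>set xs. (x, x) \<notin> S) \<and> sorted_wrt (\<lambda>x y. (y, x) \<notin> S) xs" for xs :: "'a list"
  proof -
    have "(\<forall>i j. i < length xs \<longrightarrow> j < length xs \<longrightarrow> (xs ! i, xs ! j) \<in> S \<longrightarrow> i < j) \<longleftrightarrow>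
          (\<forall>i j. i < length xs \<longrightarrow> j < length xs \<longrightarrow> j \<le> i \<longrightarrow> (xs ! i, xs ! j) \<notin> S)"
      by (meson not_le)
    also have "\<dots> \<longleftrightarrow> (\<forall>i < length xs. (xs ! i, xs ! i) \<notin> S) \<and>
          (\<forall>i j. j < i \<longrightarrow> i < length xs \<longrightarrow> (xs ! i, xs ! j) \<notin> S)"
      by (auto simp: le_less)
    finally show ?thesis
      unfolding sorted_wrt_iff_nth_less all_set_conv_all_nth by blast
  qed
  then show ?thesis
    unfolding ext_def linear_extensions_def
    by (intro arg_cong[where f = card] Collect_cong) (auto simp only: compatible_iff)
qed

lemma finite_linear_extensions: "finite A \<Longrightarrow> finite (linear_extensions A S)"
  by (rule finite_subset[OF _ finite_subset_distinct[of A]]) (auto simp: linear_extensions_def)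

lemma ext_cong:
  assumes "S \<inter> A \<times> A = S' \<inter> A \<times> A"
  shows "ext A S = ext A S'"
proof -
  have same: "(x, y) \<in> S \<longleftrightarrow> (x, y) \<in> S'" if "x \<in> A" "y \<in> A" for x y
    using assms that by blast
  have "sorted_wrt (\<lambda>x y. (y, x) \<notin> S) xs \<longleftrightarrow> sorted_wrt (\<lambda>x y. (y, x) \<notin> S') xs"
    if "set xs = A" for xs
    using that by (auto elim!: sorted_wrt_mono_rel[rotated] simp: same)
  then have "linear_extensions A S = linear_extensions A S'"
    unfolding linear_extensions_def using same by auto
  then show ?thesis by (simp add: ext_eq_card)
qed

lemma ext_union_outside:
  assumes "\<And>u v. (u, v) \<in> X \<Longrightarrow> u \<notin> A"
  shows "ext A (S \<union> X) = ext A S"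
  by (rule ext_cong) (use assms in auto)

lemma ext_singleton: "(a, a) \<notin> S \<Longrightarrow> ext {a} S = 1"
proof -
  assume "(a, a) \<notin> S"
  moreover have "xs = [a]" if "distinct xs" "set xs = {a}" for xs :: "'a list"
  proof -
    have "length xs = 1"
      using distinct_card[OF that(1)] that(2) by simp
    then obtain y where "xs = [y]"
      by (auto simp: length_Suc_conv)
    with that(2) show ?thesis by simp
  qed
  ultimately have "linear_extensions {a} S = {[a]}"
    unfolding linear_extensions_def by auto
  then show ?thesis by (simp add: ext_eq_card)
qed

lemma ext_insert_least:
  assumes "x \<notin> A" "(x, x) \<notin> T" "\<And>y. y \<in> A \<Longrightarrow> (x, y) \<in> T \<and> (y, x) \<notin> T"
  shows "ext (insert x A) T = ext A T"
proof -
  have "linear_extensions (insert x A) T = (#) x ` linear_extensions A T"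
  proof (intro equalityI subsetI)
    fix xs assume xs: "xs \<in> linear_extensions (insert x A) T"
    then obtain z zs where z: "xs = z # zs"
      by (cases xs) (auto simp: linear_extensions_def)
    have "z = x"
    proof (rule ccontr)
      assume "z \<noteq> x"
      then have "z \<in> A" "x \<in> set zs"
        using set_linear_extensions[OF xs] z by (auto simp: linear_extensions_def)
      then show False
        using xs z assms(3) by (auto simp: Cons_in_linear_extensions)
    qed
    then show "xs \<in> (#) x ` linear_extensions A T"
      using xs z assms(1) by (auto simp: Cons_in_linear_extensions)
  next
    fix xs assume "xs \<in> (#) x ` linear_extensions A T"
    then obtain ys where "xs = x # ys" "ys \<in> linear_extensions A T" by blast
    then show "xs \<in> linear_extensions (insert x A) T"
      using assms set_linear_extensions by (fastforce simp: Cons_in_linear_extensions)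
  qed
  then show ?thesis by (simp add: ext_eq_card card_image)
qed

lemma Cons_in_linear_extensions_insert_least_except:
  assumes "z # zs \<in> linear_extensions (insert x A) T" "z \<noteq> x" "x \<notin> A"
    and "\<And>y. y \<in> A \<Longrightarrow> y \<noteq> a \<Longrightarrow> (x, y) \<in> T"
  shows "z = a \<and> (\<exists>ws. zs = x # ws \<and> ws \<in> linear_extensions (A - {a}) T)"
proof -
  have zs: "zs \<in> linear_extensions (insert x A - {z}) T" "\<forall>y\<in>set zs. (y, z) \<notin> T"
    and "z \<in> A"
    using assms(1,2) by (auto simp: Cons_in_linear_extensions)
  have "x \<in> set zs"
    using set_linear_extensions[OF zs(1)] assms(2) by auto
  have "z = a"
    using assms(4)[OF \<open>z \<in> A\<close>] zs(2) \<open>x \<in> set zs\<close> by blast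
  obtain w ws where w: "zs = w # ws"
    using \<open>x \<in> set zs\<close> by (cases zs) auto
  have ws: "ws \<in> linear_extensions (insert x A - {a} - {w}) T" "\<forall>y\<in>set ws. (y, w) \<notin> T"
    and "w \<in> insert x A - {a}"
    using zs(1) w \<open>z = a\<close> by (auto simp: Cons_in_linear_extensions)
  have "w = x"
  proof (rule ccontr)
    assume "w \<noteq> x"
    then have "x \<in> set ws"
      using \<open>x \<in> set zs\<close> w by simp
    moreover have "(x, w) \<in> T"
      using assms(4) \<open>w \<in> insert x A - {a}\<close> \<open>w \<noteq> x\<close> by blast
    ultimately show False
      using ws(2) by blast
  qed
  moreover have "insert x A - {a} - {x} = A - {a}"
    using assms(3) by auto
  ultimately show ?thesis
    using w ws(1) \<open>z = a\<close> by auto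
qed

lemma ext_insert_least_except:
  assumes "finite A" "x \<notin> A" "a \<in> A" "(x, x) \<notin> T" "(x, a) \<notin> T"
    and "\<And>y. y \<in> A \<Longrightarrow> (y, x) \<notin> T \<and> (y, a) \<notin> T"
    and "\<And>y. y \<in> A \<Longrightarrow> y \<noteq> a \<Longrightarrow> (x, y) \<in> T"
  shows "ext (insert x A) T = ext A T + ext (A - {a}) T"
proof -
  have A_x: "insert x A - {x} = A" and A_ax: "insert x A - {a} - {x} = A - {a}"
    using assms(2) by auto
  have "linear_extensions (insert x A) T =
      (#) x ` linear_extensions A T \<union> (\<lambda>xs. a # x # xs) ` linear_extensions (A - {a}) T"
  proof (intro equalityI subsetI)
    fix xs assume xs: "xs \<in> linear_extensions (insert x A) T"
    then obtain z zs where z: "xs = z # zs"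
      by (cases xs) (auto simp: linear_extensions_def)
    show "xs \<in> (#) x ` linear_extensions A T \<union> (\<lambda>xs. a # x # xs) ` linear_extensions (A - {a}) T"
    proof (cases "z = x")
      case True
      then show ?thesis
        using xs z A_x by (auto simp: Cons_in_linear_extensions)
    next
      case False
      then show ?thesis
        using Cons_in_linear_extensions_insert_least_except[of z zs x A T a] xs z assms(2,7) by blast
    qed
  next
    fix xs assume "xs \<in> (#) x ` linear_extensions A T \<union> (\<lambda>xs. a # x # xs) ` linear_extensions (A - {a}) T"
    then consider ys where "xs = x # ys" "ys \<in> linear_extensions A T"
      | ys where "xs = a # x # ys" "ys \<in> linear_extensions (A - {a}) T"
      by blast
    then show "xs \<in> linear_extensions (insert x A) T"
    proof cases
      case 1
      then show ?thesis
        using assms(4,6) A_x set_linear_extensions[OF 1(2)] by (auto simp: Cons_in_linear_extensions)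
    next
      case 2
      have "a \<noteq> x"
        using assms(2,3) by blast
      have "x # ys \<in> linear_extensions (insert x A - {a}) T"
        using 2 assms(4,6) A_ax \<open>a \<noteq> x\<close> set_linear_extensions[OF 2(2)]
        by (auto simp: Cons_in_linear_extensions)
      then show ?thesis
        using 2 assms(3,5,6) set_linear_extensions[OF 2(2)] by (auto simp: Cons_in_linear_extensions)
    qed
  qed
  moreover have "(#) x ` linear_extensions A T \<inter> (\<lambda>xs. a # x # xs) ` linear_extensions (A - {a}) T = {}"
    using assms(2,3) by auto
  ultimately show ?thesis
    using assms(1)
    by (simp add: ext_eq_card card_Un_disjoint finite_linear_extensions card_image inj_on_def)
qed

lemma ext_adjoin_least:
  fixes n :: nat
  assumes "S \<subseteq> {..<n} \<times> {..<n}" "B \<subseteq> {..<n}" "X \<subseteq> {n} \<times> {..<n}" "{n} \<times> B \<subseteq> X"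
  shows "ext (insert n B) (S \<union> X) = ext B S"
proof -
  have "ext (insert n B) (S \<union> X) = ext B (S \<union> X)"
    by (rule ext_insert_least) (use assms in auto)
  also have "\<dots> = ext B S"
    by (rule ext_union_outside) (use assms in auto)
  finally show ?thesis .
qed

lemma ext_adjoin_least_except:
  fixes n :: nat
  assumes "S \<subseteq> {..<n} \<times> {..<n}" "a < n" "\<forall>y. (y, a) \<notin> S"
  shows "ext {..<Suc n} (S \<union> {(n, y) |y. y < n \<and> y \<noteq> a}) = ext {..<n} S + ext ({..<n} - {a}) S"
proof -
  let ?X = "{(n, y) |y. y < n \<and> y \<noteq> a}"
  have "ext (insert n {..<n}) (S \<union> ?X) = ext {..<n} (S \<union> ?X) + ext ({..<n} - {a}) (S \<union> ?X)"
    by (rule ext_insert_least_except) (use assms in auto)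
  also have "\<dots> = ext {..<n} S + ext ({..<n} - {a}) S"
    by (subst (1 2) ext_union_outside) auto
  finally show ?thesis
    by (simp add: lessThan_Suc)
qed

abbreviation pos_rel :: "nat \<Rightarrow> nat \<Rightarrow> (nat \<times> nat) set" where "pos_rel n k \<equiv> fst (pos n k)"
abbreviation pos_L :: "nat \<Rightarrow> nat \<Rightarrow> nat" where "pos_L n k \<equiv> fst (snd (pos n k))"
abbreviation pos_R :: "nat \<Rightarrow> nat \<Rightarrow> nat" where "pos_R n k \<equiv> snd (snd (pos n k))"

lemma pos_two: "pos 2 k = ({(0, 1)}, 0, 1)"
  by (simp add: numeral_2_eq_2)

lemma pos_Suc_cases:
  assumes "2 \<le> n" "odd k" "k < 2 ^ n"
  obtains (left) q where "odd q" "q < 2 ^ (n - 1)" "k + 1 = 2 * q"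
      "pos (Suc n) k = (pos_rel n q \<union> {(n, y) |y. y < n \<and> y \<noteq> pos_L n q}, pos_L n q, n)"
  | (right_minimal) q where "odd q" "q < 2 ^ (n - 1)" "k = 2 * q + 1"
      "\<forall>y. (y, pos_R n q) \<notin> pos_rel n q"
      "pos (Suc n) k = (pos_rel n q \<union> {(n, y) |y. y < n \<and> y \<noteq> pos_R n q}, n, pos_R n q)"
  | (right_nonminimal) q z where "odd q" "q < 2 ^ (n - 1)" "k = 2 * q + 1"
      "(z, pos_R n q) \<in> pos_rel n q"
      "pos (Suc n) k = (pos_rel n q \<union> {(n, y) |y. y < n}, n, pos_R n q)"
proof -
  obtain m where n: "n = Suc (Suc m)"
    using assms(1) by (metis add_2_eq_Suc le_Suc_ex)
  have pow: "(2::nat) ^ n = 2 * 2 ^ (n - 1)" and "even ((2::nat) ^ (n - 1))"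
    by (simp_all add: n)
  show thesis
  proof (cases "odd ((k + 1) div 2)")
    case True
    define q where "q = (k + 1) div 2"
    have "k + 1 = 2 * q"
      using assms(2) unfolding q_def by presburger
    moreover have "q < 2 ^ (n - 1)"
    proof -
      have "q \<le> 2 ^ (n - 1)"
        using assms(3) \<open>k + 1 = 2 * q\<close> unfolding pow by linarith
      moreover have "q \<noteq> 2 ^ (n - 1)"
        using True \<open>even (2 ^ (n - 1))\<close> unfolding q_def by auto
      ultimately show ?thesis by simp
    qed
    ultimately show thesis
      using left[of q] True unfolding q_def by (simp add: n Let_def split_def)
  next
    case False
    define q where "q = (k - 1) div 2"
    have "k = 2 * q + 1" "odd q"
      using assms(2) False unfolding q_def by presburger+
    moreover have "q < 2 ^ (n - 1)"
      using assms(3) \<open>k = 2 * q + 1\<close> unfolding pow by linarith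
    moreover have "pos (Suc n) k = (if \<forall>y. (y, pos_R n q) \<notin> pos_rel n q
        then pos_rel n q \<union> {(n, y) |y. y < n \<and> y \<noteq> pos_R n q}
        else pos_rel n q \<union> {(n, y) |y. y < n}, n, pos_R n q)"
      using False unfolding q_def by (simp add: n Let_def split_def)
    ultimately show thesis
      using right_minimal[of q] right_nonminimal[of q] by (cases "\<forall>y. (y, pos_R n q) \<notin> pos_rel n q") auto
  qed
qed

lemma pos_wf:
  assumes "2 \<le> n" "odd k" "k < 2 ^ (n - 1)"
  shows "pos_rel n k \<subseteq> {..<n} \<times> {..<n} \<and> pos_L n k < n \<and> pos_R n k < n \<and>
    (\<forall>y. (y, pos_L n k) \<notin> pos_rel n k)"
  using assms
proof (induction n arbitrary: k rule: nat_induct_at_least)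
  case base
  then show ?case by (simp add: pos_two)
next
  case (Suc n)
  have "odd k" "k < 2 ^ n"
    using Suc.prems by simp_all
  with Suc.hyps show ?case
  proof (cases rule: pos_Suc_cases)
    case (left q)
    then show ?thesis using Suc.IH[of q] by auto
  next
    case (right_minimal q)
    then show ?thesis using Suc.IH[of q] by auto
  next
    case (right_nonminimal q)
    then show ?thesis using Suc.IH[of q] by auto
  qed
qed

lemma pos_R_not_minimal:
  assumes "2 \<le> n" "odd k" "k < 2 ^ (n - 1)" "(y, pos_R n k) \<in> pos_rel n k"
  shows "k + 1 = 2 ^ (n - 1)"
  using assms
proof (induction n arbitrary: k y rule: nat_induct_at_least)
  case base
  then have "odd k" "k < 2" by simp_all
  then have "k = 1" by presburger
  then show ?case by simp
next
  case (Suc n)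
  have "odd k" "k < 2 ^ n"
    using Suc.prems by simp_all
  with Suc.hyps show ?case
  proof (cases rule: pos_Suc_cases)
    case (left q)
    then show ?thesis
      using pos_wf[OF Suc.hyps left(1,2)] Suc.prems(3) by auto
  next
    case (right_minimal q)
    then show ?thesis
      using Suc.prems(3) by auto
  next
    case (right_nonminimal q z)
    then have "q + 1 = 2 ^ (n - 1)"
      using Suc.IH by blast
    then show ?thesis
      using right_nonminimal(3) Suc.hyps by (cases n) auto
  qed
qed

lemma odd_mult_power2_eqD:
  fixes k k' :: nat
  assumes "odd k" "odd k'" "k * 2 ^ i = k' * 2 ^ j"
  shows "i = j \<and> k = k'"
proof -
  have *: "i = j \<and> k = k'" if "odd k" "k * 2 ^ i = k' * 2 ^ j" "i \<le> j" for k k' :: nat and i j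
  proof -
    have "k * 2 ^ i = (k' * 2 ^ (j - i)) * 2 ^ i"
      using that(2,3) by (simp add: power_add[symmetric])
    then have "k = k' * 2 ^ (j - i)"
      by simp
    then have "j - i = 0"
      using that(1) by (cases "j - i") auto
    then show ?thesis
      using \<open>k = k' * 2 ^ (j - i)\<close> that(3) by simp
  qed
  show ?thesis
    using *[of k i k' j] *[of k' j k i] assms by (cases "i \<le> j") auto
qed

lemma digits_code_unique:
  assumes "digits_code b n k" "digits_code b n' k'"
  shows "n = n' \<and> k = k'"
proof -
  have "real k / 2 ^ (n - 1) > 0" if "odd k" for k n
    using that by (cases k) auto
  moreover have "n = n' \<and> k = k'"
    if "odd k" "odd k'" "real k / 2 ^ (n - 1) = real k' / 2 ^ (n' - 1)" "n \<ge> 2" "n' \<ge> 2"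
    for k k' n n'
  proof -
    have "real (k * 2 ^ (n' - 1)) = real (k' * 2 ^ (n - 1))"
      using that(3) by (simp add: field_simps)
    then have "k * 2 ^ (n' - 1) = k' * 2 ^ (n - 1)"
      by (simp only: of_nat_eq_iff)
    then have "n' - 1 = n - 1 \<and> k = k'"
      by (rule odd_mult_power2_eqD[OF that(1,2)])
    with that(4,5) show ?thesis by auto
  qed
  ultimately show ?thesis
    using assms unfolding digits_code_def by (metis less_irrefl)
qed

lemma extP_eq_ext_pos:
  assumes "digits_code b n k"
  shows "extP b = ext {..<n} (pos_rel n k)"
proof -
  have "b < 1"
    using assms unfolding digits_code_def by (auto simp: divide_less_eq)
  moreover have "(THE (n', k'). digits_code b n' k') = (n, k)"
    using assms digits_code_unique by (intro the_equality) auto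
  ultimately show ?thesis
    by (simp add: extP_def atLeast0LessThan)
qed

lemma extP_dyadic:
  assumes "2 \<le> n" "odd k" "k < 2 ^ (n - 1)"
  shows "extP (real k / 2 ^ (n - 1)) = ext {..<n} (pos_rel n k)"
  by (rule extP_eq_ext_pos) (use assms in \<open>simp add: digits_code_def\<close>)

lemma extP_zero: "extP 0 = 1"
proof -
  have "extP 0 = ext {..<1} (pos_rel 1 0)"
    by (rule extP_eq_ext_pos) (simp add: digits_code_def)
  then show ?thesis
    by (simp add: ext_singleton lessThan_Suc)
qed

lemma extP_one: "extP 1 = 0"
  by (simp add: extP_def)

lemma double_div_power2: "1 \<le> n \<Longrightarrow> real (2 * m) / 2 ^ n = real m / 2 ^ (n - 1)"
  by (cases n) auto

lemma ext_pos_delete_L: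
  assumes "2 \<le> n" "odd k" "k < 2 ^ (n - 1)"
  shows "ext ({..<n} - {pos_L n k}) (pos_rel n k) = extP (real (k - 1) / 2 ^ (n - 1))"
  using assms
proof (induction n arbitrary: k rule: nat_induct_at_least)
  case base
  then have "odd k" "k < 2" by simp_all
  then have "k = 1" by presburger
  moreover have "{..<2::nat} - {0} = {1}" by auto
  ultimately show ?case
    by (simp add: pos_two ext_singleton extP_zero)
next
  case (Suc n)
  have "odd k" "k < 2 ^ n"
    using Suc.prems by simp_all
  with Suc.hyps show ?case
  proof (cases rule: pos_Suc_cases)
    case (left q)
    note wf = pos_wf[OF Suc.hyps left(1,2)]
    have "{..<Suc n} - {pos_L n q} = insert n ({..<n} - {pos_L n q})"
      using wf by auto
    then have "ext ({..<Suc n} - {pos_L (Suc n) k}) (pos_rel (Suc n) k) =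
        ext ({..<n} - {pos_L n q}) (pos_rel n q)"
      using left(4) wf by (auto intro!: ext_adjoin_least)
    also have "\<dots> = extP (real (q - 1) / 2 ^ (n - 1))"
      using Suc.IH[OF left(1,2)] .
    also have "\<dots> = extP (real (k - 1) / 2 ^ (Suc n - 1))"
    proof -
      have "k - 1 = 2 * (q - 1)"
        using left(3) by simp
      then show ?thesis
        using Suc.hyps by (simp only: double_div_power2 diff_Suc_1)
    qed
    finally show ?thesis .
  next
    case (right_minimal q)
    then have "ext ({..<Suc n} - {pos_L (Suc n) k}) (pos_rel (Suc n) k) = ext {..<n} (pos_rel n q)"
      by (simp add: lessThan_Suc) (rule ext_union_outside, auto)
    also have "\<dots> = extP (real q / 2 ^ (n - 1))"
      using extP_dyadic[OF Suc.hyps right_minimal(1,2)] ..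
    also have "\<dots> = extP (real (k - 1) / 2 ^ (Suc n - 1))"
      using right_minimal(3) Suc.hyps by (simp only: double_div_power2 diff_Suc_1 diff_add_inverse2)
    finally show ?thesis .
  next
    case (right_nonminimal q)
    then have "ext ({..<Suc n} - {pos_L (Suc n) k}) (pos_rel (Suc n) k) = ext {..<n} (pos_rel n q)"
      by (simp add: lessThan_Suc) (rule ext_union_outside, auto)
    also have "\<dots> = extP (real q / 2 ^ (n - 1))"
      using extP_dyadic[OF Suc.hyps right_nonminimal(1,2)] ..
    also have "\<dots> = extP (real (k - 1) / 2 ^ (Suc n - 1))"
      using right_nonminimal(3) Suc.hyps by (simp only: double_div_power2 diff_Suc_1 diff_add_inverse2)
    finally show ?thesis .
  qed
qed

lemma ext_pos_delete_R:
  assumes "2 \<le> n" "odd k" "k < 2 ^ (n - 1)" "\<forall>y. (y, pos_R n k) \<notin> pos_rel n k"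
  shows "ext ({..<n} - {pos_R n k}) (pos_rel n k) = extP (real (k + 1) / 2 ^ (n - 1))"
  using assms
proof (induction n arbitrary: k rule: nat_induct_at_least)
  case base
  then have "(0, pos_R 2 k) \<notin> pos_rel 2 k"
    by blast
  then show ?case by (simp add: pos_two)
next
  case (Suc n)
  have "odd k" "k < 2 ^ n"
    using Suc.prems by simp_all
  with Suc.hyps show ?case
  proof (cases rule: pos_Suc_cases)
    case (left q)
    then have "ext ({..<Suc n} - {pos_R (Suc n) k}) (pos_rel (Suc n) k) = ext {..<n} (pos_rel n q)"
      by (simp add: lessThan_Suc) (rule ext_union_outside, auto)
    also have "\<dots> = extP (real q / 2 ^ (n - 1))"
      using extP_dyadic[OF Suc.hyps left(1,2)] ..
    also have "\<dots> = extP (real (k + 1) / 2 ^ (Suc n - 1))"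
      using left(3) Suc.hyps by (simp only: double_div_power2 diff_Suc_1)
    finally show ?thesis .
  next
    case (right_minimal q)
    note wf = pos_wf[OF Suc.hyps right_minimal(1,2)]
    have "{..<Suc n} - {pos_R n q} = insert n ({..<n} - {pos_R n q})"
      using wf by auto
    then have "ext ({..<Suc n} - {pos_R (Suc n) k}) (pos_rel (Suc n) k) =
        ext ({..<n} - {pos_R n q}) (pos_rel n q)"
      using right_minimal(5) wf by (auto intro!: ext_adjoin_least)
    also have "\<dots> = extP (real (q + 1) / 2 ^ (n - 1))"
      using Suc.IH[OF right_minimal(1,2,4)] .
    also have "\<dots> = extP (real (k + 1) / 2 ^ (Suc n - 1))"
    proof -
      have "k + 1 = 2 * (q + 1)"
        using right_minimal(3) by simp
      then show ?thesis
        using Suc.hyps by (simp only: double_div_power2 diff_Suc_1)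
    qed
    finally show ?thesis .
  next
    case (right_nonminimal q z)
    then have "(z, pos_R (Suc n) k) \<in> pos_rel (Suc n) k"
      by simp
    then show ?thesis
      using Suc.prems(3) by blast
  qed
qed

lemma ext_pos_recurrence:
  assumes "2 \<le> n" "odd k" "k < 2 ^ (n - 1)"
  shows "ext {..<n} (pos_rel n k) = extP (real (k - 1) / 2 ^ (n - 1)) + extP (real (k + 1) / 2 ^ (n - 1))"
proof (cases "n = 2")
  case True
  with assms have "k = 1" by simp presburger
  moreover have "ext (insert 0 {1}) {(0::nat, 1)} = 1"
    by (subst ext_insert_least) (auto simp: ext_singleton)
  moreover have "{..<2::nat} = insert 0 {1}" by auto
  ultimately show ?thesis
    using True by (simp add: pos_two extP_zero extP_one)
next
  case False
  then obtain m where n: "n = Suc m" and m: "2 \<le> m"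
    using assms(1) by (cases n) auto
  have "odd k" "k < 2 ^ m"
    using assms n by simp_all
  with m show ?thesis
  proof (cases rule: pos_Suc_cases)
    case (left q)
    note wf = pos_wf[OF m left(1,2)]
    have "k - 1 = 2 * (q - 1)"
      using left(3) by simp
    then have lower: "real (k - 1) / 2 ^ (n - 1) = real (q - 1) / 2 ^ (m - 1)"
      and upper: "real (k + 1) / 2 ^ (n - 1) = real q / 2 ^ (m - 1)"
      using left(3) m by (simp_all only: n double_div_power2 diff_Suc_1)
    have "ext {..<n} (pos_rel n k) = ext {..<m} (pos_rel m q) + ext ({..<m} - {pos_L m q}) (pos_rel m q)"
      using left(4) wf n by (simp add: ext_adjoin_least_except)
    then show ?thesis
      unfolding lower upper extP_dyadic[OF m left(1,2)] ext_pos_delete_L[OF m left(1,2)] by simp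
  next
    case (right_minimal q)
    note wf = pos_wf[OF m right_minimal(1,2)]
    have "k - 1 = 2 * q" "k + 1 = 2 * (q + 1)"
      using right_minimal(3) by simp_all
    then have lower: "real (k - 1) / 2 ^ (n - 1) = real q / 2 ^ (m - 1)"
      and upper: "real (k + 1) / 2 ^ (n - 1) = real (q + 1) / 2 ^ (m - 1)"
      using m by (simp_all only: n double_div_power2 diff_Suc_1)
    have "ext {..<n} (pos_rel n k) = ext {..<m} (pos_rel m q) + ext ({..<m} - {pos_R m q}) (pos_rel m q)"
      using right_minimal(4,5) wf n by (simp add: ext_adjoin_least_except)
    then show ?thesis
      unfolding lower upper extP_dyadic[OF m right_minimal(1,2)]
        ext_pos_delete_R[OF m right_minimal(1,2,4)] by simp
  next
    case (right_nonminimal q z)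
    note wf = pos_wf[OF m right_nonminimal(1,2)]
    have lower: "real (k - 1) / 2 ^ (n - 1) = real q / 2 ^ (m - 1)"
      using right_nonminimal(3) m by (simp only: n double_div_power2 diff_Suc_1 diff_add_inverse2)
    have "k + 1 = 2 ^ (n - 1)"
      using pos_R_not_minimal[OF m right_nonminimal(1,2,4)] right_nonminimal(3) n m
      by (cases m) auto
    then have upper: "real (k + 1) / 2 ^ (n - 1) = 1"
      by simp
    have "ext {..<n} (pos_rel n k) = ext {..<m} (pos_rel m q)"
      using right_nonminimal(5) wf n by (simp add: lessThan_Suc) (rule ext_adjoin_least, auto)
    then show ?thesis
      unfolding lower upper extP_dyadic[OF m right_nonminimal(1,2)] extP_one by simp
  qed
qed

theorem proposition3p1:
  fixes b :: real and n :: nat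
  assumes "n \<ge> 2" and "has_digits b n"
  shows "extP b = extP (b - 1 / 2 ^ (n - 1)) + extP (b + 1 / 2 ^ (n - 1))"
proof -
  obtain k where code: "digits_code b n k"
    using assms(2) unfolding has_digits_def by blast
  then have k: "odd k" "k < 2 ^ (n - 1)" and b: "b = real k / 2 ^ (n - 1)"
    using assms(1) unfolding digits_code_def by auto
  have "1 \<le> k"
    using k(1) by (cases k) auto
  then have "b - 1 / 2 ^ (n - 1) = real (k - 1) / 2 ^ (n - 1)"
    and "b + 1 / 2 ^ (n - 1) = real (k + 1) / 2 ^ (n - 1)"
    unfolding b by (simp_all add: of_nat_diff diff_divide_distrib add_divide_distrib)
  then show ?thesis
    using extP_eq_ext_pos[OF code] ext_pos_recurrence[OF assms(1) k] by simp
qed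

end
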